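(* Let $X=[0,\infty)\subset\mathbb{R}$ and $\mathcal{A}=\{\alpha_1,\dots,\alpha_m\}\subset\mathbb{R}$ with $\alpha_1<\cdots<\alpha_m$; identify $\mathbb{R}^{\mathcal{A}}$ with $\mathbb{R}^m$ with standard basis $\delta_1,\dots,\delta_m$. Then the set of normalized reduced $[0,\infty)$-circuits of $\mathcal{A}$ is \[\Lambda^\star_{[0,\infty)}(\mathcal{A})=\{\delta_2-\delta_1\}\cup\Big\{\frac{\alpha_{i+1}-\alpha_i}{\alpha_{i+1}-\alpha_{i-1}}\delta_{i-1}+\frac{\alpha_i-\alpha_{i-1}}{\alpha_{i+1}-\alpha_{i-1}}\delta_{i+1}-\delta_i\ :\ 1<i<m\Big\}\] (for $m\ge2$).
   Context: For a nonempty closed convex $X\subset\mathbb{R}^n$ and nonempty finite $\mathcal{A}\subset\mathbb{R}^n$: $\mathcal{A}\nu=\sum_\alpha\alpha\nu_\alpha$ for $\nu\in\mathbb{R}^{\mathcal{A}}$; $\sigma_X(y)=\sup\{y^Tx:x\in X\}\in\mathbb{R}\cup\{+\infty\}$; for $\beta\in\mathcal{A}$, $N_\beta=\{\nu\in\mathbb{R}^{\mathcal{A}}:\nu_\alpha\ge0\ \forall\alpha\neq\beta,\ \sum_\alpha\nu_\alpha=0\}$. A vector $\nu^\star\in N_\beta$ is an $X$-circuit of $\mathcal{A}$ if (1) $\nu^\star\neq0$, (2) $\sigma_X(-\mathcal{A}\nu^\star)<\infty$, and (3) $\nu^\star$ cannot be written as a convex combination of two non-proportional vectors $\nu^{(1)},\nu^{(2)}\in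 N_\beta$ such that the map $\nu\mapsto\sigma_X(-\mathcal{A}\nu)$ is affine on the segment $[\nu^{(1)},\nu^{(2)}]$. $\Lambda_X(\mathcal{A})$ is the set of all $X$-circuits normalized so that the unique negative entry equals $-1$. The functional form of $\lambda\in\Lambda_X(\mathcal{A})$ is $\phi_\lambda=(\lambda,\sigma_X(-\mathcal{A}\lambda))\in\mathbb{R}^{\mathcal{A}}\times\mathbb{R}$; the circuit graph is $G_X(\mathcal{A})=\operatorname{cone}(\{\phi_\lambda:\lambda\in\Lambda_X(\mathcal{A})\}\cup\{(0,1)\})$; and the normalized reduced $X$-circuits $\Lambda_X^\star(\mathcal{A})$ are those $\lambda\in\Lambda_X(\mathcal{A})$ for which $\{t\phi_\lambda:t\ge0\}$ is an extreme ray of $G_X(\mathcal{A})$. *)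

theory Defs
  imports "HOL-Analysis.Analysis"
begin

text \<open>Vectors in R^A are modelled as functions nu :: 'v => real that vanish outside A.\<close>

definition lin_comb :: "'v::real_vector set \<Rightarrow> ('v \<Rightarrow> real) \<Rightarrow> 'v" where
  "lin_comb A \<nu> = (\<Sum>a\<in>A. \<nu> a *\<^sub>R a)"

definition supp_fun :: "'v::real_inner set \<Rightarrow> 'v \<Rightarrow> ereal" where
  "supp_fun X y = (SUP x\<in>X. ereal (y \<bullet> x))"

definition circ_fun :: "'v::real_inner set \<Rightarrow> 'v set \<Rightarrow> ('v \<Rightarrow> real) \<Rightarrow> ereal" where
  "circ_fun X A \<nu> = supp_fun X (- lin_comb A \<nu>)"

definition Ncone :: "'v set \<Rightarrow> 'v \<Rightarrow> ('v \<Rightarrow> real) set" where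
  "Ncone A \<beta> = {\<nu>. (\<forall>a. a \<notin> A \<longrightarrow> \<nu> a = 0) \<and> (\<forall>a\<in>A. a \<noteq> \<beta> \<longrightarrow> \<nu> a \<ge> 0) \<and> (\<Sum>a\<in>A. \<nu> a) = 0}"

definition proportional :: "('v \<Rightarrow> real) \<Rightarrow> ('v \<Rightarrow> real) \<Rightarrow> bool" where
  "proportional \<mu> \<nu> \<longleftrightarrow> (\<exists>c. \<mu> = (\<lambda>a. c * \<nu> a)) \<or> (\<exists>c. \<nu> = (\<lambda>a. c * \<mu> a))"

definition affine_on_segment :: "'v::real_inner set \<Rightarrow> 'v set \<Rightarrow> ('v \<Rightarrow> real) \<Rightarrow> ('v \<Rightarrow> real) \<Rightarrow> bool" where
  "affine_on_segment X A \<nu>1 \<nu>2 \<longleftrightarrow>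
     circ_fun X A \<nu>1 < \<infinity> \<and> circ_fun X A \<nu>2 < \<infinity> \<and>
     (\<forall>s::real. 0 \<le> s \<and> s \<le> 1 \<longrightarrow>
        circ_fun X A (\<lambda>a. (1 - s) * \<nu>1 a + s * \<nu>2 a)
          = ereal (1 - s) * circ_fun X A \<nu>1 + ereal s * circ_fun X A \<nu>2)"

definition is_X_circuit :: "'v::real_inner set \<Rightarrow> 'v set \<Rightarrow> 'v \<Rightarrow> ('v \<Rightarrow> real) \<Rightarrow> bool" where
  "is_X_circuit X A \<beta> \<nu> \<longleftrightarrow>
     \<nu> \<in> Ncone A \<beta> \<and> \<nu> \<noteq> (\<lambda>_. 0) \<and> circ_fun X A \<nu> < \<infinity> \<and>
     \<not> (\<exists>\<nu>1 \<in> Ncone A \<beta>. \<exists>\<nu>2 \<in> Ncone A \<beta>. \<exists>t::real. 0 < t \<and> t < 1 \<and>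
          \<not> proportional \<nu>1 \<nu>2 \<and>
          \<nu> = (\<lambda>a. (1 - t) * \<nu>1 a + t * \<nu>2 a) \<and>
          affine_on_segment X A \<nu>1 \<nu>2)"

definition norm_circuits :: "'v::real_inner set \<Rightarrow> 'v set \<Rightarrow> ('v \<Rightarrow> real) set" where
  "norm_circuits X A = {l. \<exists>\<beta>\<in>A. is_X_circuit X A \<beta> l \<and> l \<beta> = -1}"

definition func_form :: "'v::real_inner set \<Rightarrow> 'v set \<Rightarrow> ('v \<Rightarrow> real) \<Rightarrow> ('v \<Rightarrow> real) \<times> real" where
  "func_form X A l = (l, real_of_ereal (circ_fun X A l))"

definition circuit_graph :: "'v::real_inner set \<Rightarrow> 'v set \<Rightarrow> (('v \<Rightarrow> real) \<times> real) set" where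
  "circuit_graph X A = {(\<nu>, r). \<exists>S c d. finite S \<and> S \<subseteq> norm_circuits X A \<and>
       (\<forall>l\<in>S. c l \<ge> (0::real)) \<and> d \<ge> (0::real) \<and>
       \<nu> = (\<lambda>a. \<Sum>l\<in>S. c l * fst (func_form X A l) a) \<and>
       r = (\<Sum>l\<in>S. c l * snd (func_form X A l)) + d}"

definition ray :: "('v \<Rightarrow> real) \<times> real \<Rightarrow> (('v \<Rightarrow> real) \<times> real) set" where
  "ray p = {((\<lambda>a. t * fst p a), t * snd p) | t. t \<ge> (0::real)}"

definition extreme_ray :: "(('v \<Rightarrow> real) \<times> real) set \<Rightarrow> ('v \<Rightarrow> real) \<times> real \<Rightarrow> bool" where
  "extreme_ray G p \<longleftrightarrow> p \<noteq> ((\<lambda>_. 0), 0) \<and> ray p \<subseteq> G \<and>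
     (\<forall>x\<in>G. \<forall>y\<in>G. ((\<lambda>a. fst x a + fst y a), snd x + snd y) \<in> ray p \<longrightarrow> x \<in> ray p \<and> y \<in> ray p)"

definition reduced_circuits :: "'v::real_inner set \<Rightarrow> 'v set \<Rightarrow> ('v \<Rightarrow> real) set" where
  "reduced_circuits X A = {l \<in> norm_circuits X A. extreme_ray (circuit_graph X A) (func_form X A l)}"

end

theory Submission
  imports Defs
begin

text \<open>
  For \<open>X = [0,\<infinity>)\<close> one has \<open>\<sigma>\<^sub>X(-\<A>\<nu>) = 0\<close> if \<open>\<Sum>\<^sub>a \<nu>\<^sub>a a \<ge> 0\<close> and \<open>\<infinity>\<close> otherwise, so
  every functional form is \<open>(\<lambda>, 0)\<close> and the circuit graph is the cone spanned by the
  normalized circuits, with an arbitrary nonnegative last coordinate. Pair a vector \<open>\<nu>\<close>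
  supported on \<open>\<A>\<close> with the hinge functions \<open>a \<mapsto> max 0 (a - t)\<close>: if \<open>\<nu> \<in> N\<^sub>\<beta>\<close> and
  \<open>\<Sum>\<^sub>a \<nu>\<^sub>a a \<ge> 0\<close>, all these hinge moments are nonnegative (treat \<open>t \<ge> \<beta>\<close> and \<open>t < \<beta>\<close>
  separately). The claimed circuits \<open>\<lambda>\<^sub>1 = \<delta>\<^sub>2 - \<delta>\<^sub>1\<close> and the barycentric \<open>\<lambda>\<^sub>i\<close>
  (\<open>1 < i < m\<close>) are, up to positive scalars, the basis of zero-sum vectors dual to the hinge
  moments at \<open>\<alpha>\<^sub>1, \<dots>, \<alpha>\<^sub>m\<^sub>-\<^sub>1\<close>; that these moments determine a zero-sum vector is seen
  by reading them off from the top node downwards. Hence every circuit lies in the simplicial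
  cone spanned by the \<open>\<lambda>\<^sub>i\<close>, each \<open>\<lambda>\<^sub>i\<close> is a circuit, and the reduced circuits are exactly
  the \<open>\<lambda>\<^sub>i\<close>.
\<close>

section \<open>The half-line \<open>[0,\<infinity>)\<close> and hinge moments\<close>

lemma supp_fun_halfline:
  fixes y :: real
  shows "supp_fun {0..} y = (if y \<le> 0 then 0 else \<infinity>)"
proof (cases "y \<le> 0")
  case True
  have "(SUP x\<in>{0::real..}. ereal (y * x)) = 0"
  proof (rule antisym)
    show "(SUP x\<in>{0::real..}. ereal (y * x)) \<le> 0"
      by (rule SUP_least) (use True in \<open>auto simp: mult_nonpos_nonneg\<close>)
    show "0 \<le> (SUP x\<in>{0::real..}. ereal (y * x))"
      using SUP_upper[of "0::real" "{0..}" "\<lambda>x. ereal (y * x)"] by (simp add: zero_ereal_def)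
  qed
  then show ?thesis
    using True by (simp add: supp_fun_def)
next
  case False
  have "(SUP x\<in>{0::real..}. ereal (y * x)) = \<infinity>"
  proof (rule SUP_PInfty)
    fix n :: nat
    show "\<exists>x\<in>{0::real..}. ereal (real n) \<le> ereal (y * x)"
      using False by (intro bexI[of _ "real n / y"]) auto
  qed
  then show ?thesis
    using False by (simp add: supp_fun_def)
qed

lemma lin_comb_real: "lin_comb A \<nu> = (\<Sum>a\<in>A. \<nu> a * (a::real))"
  by (simp add: lin_comb_def)

lemma circ_fun_halfline:
  fixes A :: "real set"
  shows "circ_fun {0..} A \<nu> = (if 0 \<le> lin_comb A \<nu> then 0 else \<infinity>)"
  by (simp add: circ_fun_def supp_fun_halfline)

definition hinge_moment :: "real set \<Rightarrow> real \<Rightarrow> (real \<Rightarrow> real) \<Rightarrow> real" where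
  "hinge_moment A t \<nu> = (\<Sum>a\<in>A. \<nu> a * max 0 (a - t))"

lemma hinge_moment_add:
  "hinge_moment A t (\<lambda>a. f a + g a) = hinge_moment A t f + hinge_moment A t g"
  by (simp add: hinge_moment_def distrib_right sum.distrib)

lemma hinge_moment_diff:
  "hinge_moment A t (\<lambda>a. f a - g a) = hinge_moment A t f - hinge_moment A t g"
  by (simp add: hinge_moment_def left_diff_distrib sum_subtractf)

lemma hinge_moment_scale:
  "hinge_moment A t (\<lambda>a. c * f a) = c * hinge_moment A t f"
  by (simp add: hinge_moment_def sum_distrib_left mult.assoc)

lemma hinge_moment_sum:
  "hinge_moment A t (\<lambda>a. \<Sum>i\<in>I. c i * f i a) = (\<Sum>i\<in>I. c i * hinge_moment A t (f i))"
  unfolding hinge_moment_def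
  by (simp add: sum_distrib_left sum_distrib_right mult.assoc) (rule sum.swap)

lemma hinge_moment_nonneg:
  fixes A :: "real set"
  assumes "\<nu> \<in> Ncone A \<beta>" and "0 \<le> lin_comb A \<nu>"
  shows "0 \<le> hinge_moment A t \<nu>"
proof -
  have sign: "0 \<le> \<nu> a" if "a \<in> A" "a \<noteq> \<beta>" for a
    using assms(1) that by (simp add: Ncone_def)
  show ?thesis
  proof (cases "\<beta> \<le> t")
    case True
    show ?thesis
      unfolding hinge_moment_def
      by (rule sum_nonneg) (use True sign in \<open>force simp: max_def\<close>)
  next
    case False
    have "hinge_moment A t \<nu> = (\<Sum>a\<in>A. \<nu> a * a - t * \<nu> a + \<nu> a * max 0 (t - a))"
      unfolding hinge_moment_def by (rule sum.cong) (auto simp: max_def algebra_simps)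
    also have "\<dots> = lin_comb A \<nu> - t * (\<Sum>a\<in>A. \<nu> a) + (\<Sum>a\<in>A. \<nu> a * max 0 (t - a))"
      by (simp add: lin_comb_real sum.distrib sum_subtractf sum_distrib_left)
    also have "(\<Sum>a\<in>A. \<nu> a) = 0"
      using assms(1) by (simp add: Ncone_def)
    finally have eq: "hinge_moment A t \<nu> = lin_comb A \<nu> + (\<Sum>a\<in>A. \<nu> a * max 0 (t - a))"
      by simp
    have "0 \<le> (\<Sum>a\<in>A. \<nu> a * max 0 (t - a))"
      by (rule sum_nonneg) (use False sign in \<open>force simp: max_def\<close>)
    then show ?thesis
      using eq assms(2) by simp
  qed
qed

definition hinge_cone :: "real set \<Rightarrow> (real \<Rightarrow> real) set" where
  "hinge_cone A = {\<nu>. (\<forall>a. a \<notin> A \<longrightarrow> \<nu> a = 0) \<and> (\<Sum>a\<in>A. \<nu> a) = 0 \<and> (\<forall>t. 0 \<le> hinge_moment A t \<nu>)}"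

lemma hinge_cone_scale:
  assumes "\<nu> \<in> hinge_cone A" and "0 \<le> c"
  shows "(\<lambda>a. c * \<nu> a) \<in> hinge_cone A"
  using assms by (simp add: hinge_cone_def hinge_moment_scale sum_distrib_left[symmetric])

lemma hinge_cone_nonneg_comb:
  assumes "S \<subseteq> hinge_cone A" and "\<forall>l\<in>S. 0 \<le> c l"
  shows "(\<lambda>a. \<Sum>l\<in>S. c l * l a) \<in> hinge_cone A"
proof -
  have "(\<Sum>a\<in>A. \<Sum>l\<in>S. c l * l a) = (\<Sum>l\<in>S. c l * (\<Sum>a\<in>A. l a))"
    by (subst sum.swap) (simp add: sum_distrib_left)
  moreover have "(\<Sum>l\<in>S. c l * l a) = 0" if "a \<notin> A" for a
    using assms(1) that by (intro sum.neutral) (auto simp: hinge_cone_def)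
  moreover have "(\<Sum>l\<in>S. c l * (\<Sum>a\<in>A. l a)) = 0"
    using assms(1) by (intro sum.neutral) (auto simp: hinge_cone_def)
  ultimately show ?thesis
    using assms by (auto simp: hinge_cone_def hinge_moment_sum intro!: sum_nonneg)
qed

lemma Ncone_halfline_in_hinge_cone:
  fixes A :: "real set"
  assumes "\<nu> \<in> Ncone A \<beta>" and "circ_fun {0..} A \<nu> < \<infinity>"
  shows "\<nu> \<in> hinge_cone A"
proof -
  have "0 \<le> lin_comb A \<nu>"
    using assms(2) by (simp add: circ_fun_halfline split: if_splits)
  then show ?thesis
    using assms(1) hinge_moment_nonneg[OF assms(1)] by (simp add: hinge_cone_def Ncone_def)
qed

lemma norm_circuit_halfline:
  fixes A :: "real set"
  assumes "l \<in> norm_circuits {0..} A"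
  shows "l \<in> hinge_cone A" and "func_form {0..} A l = (l, 0)"
proof -
  obtain \<beta> where N: "l \<in> Ncone A \<beta>" and fin: "circ_fun {0..} A l < \<infinity>"
    using assms by (auto simp: norm_circuits_def is_X_circuit_def)
  then show "l \<in> hinge_cone A"
    by (rule Ncone_halfline_in_hinge_cone)
  show "func_form {0..} A l = (l, 0)"
    using fin by (simp add: func_form_def circ_fun_halfline split: if_splits)
qed

lemma proportional_multiples:
  assumes "\<mu> = (\<lambda>a. p * g a)" and "\<nu> = (\<lambda>a. q * g a)"
  shows "proportional \<mu> \<nu>"
proof (cases "p = 0")
  case True
  then have "\<mu> = (\<lambda>a. 0 * \<nu> a)"
    using assms(1) by simp
  then show ?thesis
    unfolding proportional_def by blast
next
  case False
  then have "\<nu> = (\<lambda>a. (q / p) * \<mu> a)"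
    using assms by (simp add: fun_eq_iff)
  then show ?thesis
    unfolding proportional_def by blast
qed

lemma circuit_graph_nonneg_comb:
  fixes g :: "'i \<Rightarrow> 'v::real_inner \<Rightarrow> real"
  assumes "finite J" and "g ` J \<subseteq> norm_circuits X A" and "\<forall>j\<in>J. 0 \<le> c j"
  shows "((\<lambda>a. \<Sum>j\<in>J. c j * g j a), \<Sum>j\<in>J. c j * snd (func_form X A (g j))) \<in> circuit_graph X A"
proof -
  define c' where "c' l = (\<Sum>j\<in>{j\<in>J. g j = l}. c j)" for l
  have "(\<Sum>j\<in>J. c j * f (g j)) = (\<Sum>l\<in>g ` J. c' l * f l)" for f :: "('v \<Rightarrow> real) \<Rightarrow> real"
  proof -
    have "(\<Sum>j\<in>J. c j * f (g j)) = (\<Sum>l\<in>g ` J. \<Sum>j\<in>{j\<in>J. g j = l}. c j * f (g j))"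
      by (rule sum.image_gen[OF assms(1)])
    also have "\<dots> = (\<Sum>l\<in>g ` J. c' l * f l)"
      unfolding c'_def sum_distrib_right by (intro sum.cong) auto
    finally show ?thesis .
  qed
  note regroup = this[of "\<lambda>l. l _"] this[of "\<lambda>l. snd (func_form X A l)"]
  have "\<forall>l\<in>g ` J. 0 \<le> c' l"
    using assms(3) by (auto simp: c'_def intro: sum_nonneg)
  then show ?thesis
    using assms(1,2) unfolding circuit_graph_def regroup
    by (intro CollectI case_prodI exI[of _ "g ` J"] exI[of _ c'] exI[of _ 0]) (auto simp: func_form_def)
qed

lemma circuit_graph_halfline:
  fixes A :: "real set"
  assumes "z \<in> circuit_graph {0..} A"
  shows "fst z \<in> hinge_cone A" and "0 \<le> snd z"
proof -
  obtain S c d where S: "finite S" "S \<subseteq> norm_circuits {0..} A"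
    and c: "\<forall>l\<in>S. 0 \<le> c l" and d: "0 \<le> d"
    and z: "z = ((\<lambda>a. \<Sum>l\<in>S. c l * fst (func_form {0..} A l) a),
                 (\<Sum>l\<in>S. c l * snd (func_form {0..} A l)) + d)"
    using assms unfolding circuit_graph_def by auto
  have ff: "func_form {0..} A l = (l, 0)" if "l \<in> S" for l
    using S(2) that norm_circuit_halfline(2) by blast
  have "fst z = (\<lambda>a. \<Sum>l\<in>S. c l * l a)" and "snd z = d"
    using ff by (simp_all add: z)
  moreover have "S \<subseteq> hinge_cone A"
    using S(2) norm_circuit_halfline(1) by blast
  ultimately show "fst z \<in> hinge_cone A" and "0 \<le> snd z"
    using hinge_cone_nonneg_comb c d by auto
qed

lemma extreme_ray_summand:
  assumes "extreme_ray G p" and "x \<in> G" and "y \<in> G"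
    and "(\<lambda>a. fst x a + fst y a) = fst p" and "snd x + snd y = snd p"
  shows "x \<in> ray p"
proof -
  have "((\<lambda>a. fst x a + fst y a), snd x + snd y) \<in> ray p"
    unfolding ray_def using assms(4,5) by (intro CollectI exI[of _ "1::real"]) auto
  then show ?thesis
    using assms(1-3) unfolding extreme_ray_def by blast
qed

section \<open>The basic circuits of an increasing sequence of nodes\<close>

lemma barycentric_weights:
  fixes a b c :: real
  assumes "a < c"
  shows "(c - b) / (c - a) + (b - a) / (c - a) = 1"
    and "(c - b) / (c - a) * a + (b - a) / (c - a) * c = b"
proof -
  have ne: "c - a \<noteq> 0"
    using assms by simp
  show "(c - b) / (c - a) + (b - a) / (c - a) = 1"
    using ne by (simp add: add_divide_distrib[symmetric])
  have "(c - b) / (c - a) * a + (b - a) / (c - a) * c = ((c - b) * a + (b - a) * c) / (c - a)"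
    by (simp add: add_divide_distrib)
  also have "(c - b) * a + (b - a) * c = b * (c - a)"
    by (simp add: algebra_simps)
  finally show "(c - b) / (c - a) * a + (b - a) / (c - a) * c = b"
    using ne by simp
qed

lemma hat_combination_vanishes:
  fixes a b c t :: real
  assumes "a < b" "b < c" "t \<le> a \<or> c \<le> t"
  shows "(c - b) / (c - a) * max 0 (a - t) + (b - a) / (c - a) * max 0 (c - t) - max 0 (b - t) = 0"
proof -
  have "0 < c - a"
    using assms by simp
  then show ?thesis
    using assms by (auto simp: max_def divide_simps) (simp add: algebra_simps)
qed

definition boundary_circuit :: "(nat \<Rightarrow> real) \<Rightarrow> real \<Rightarrow> real" where
  "boundary_circuit \<alpha> = (\<lambda>a. (if a = \<alpha> 2 then 1 else 0) - (if a = \<alpha> 1 then 1 else 0))"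

definition interior_circuit :: "(nat \<Rightarrow> real) \<Rightarrow> nat \<Rightarrow> real \<Rightarrow> real" where
  "interior_circuit \<alpha> i = (\<lambda>a. (\<alpha> (i+1) - \<alpha> i) / (\<alpha> (i+1) - \<alpha> (i-1)) * (if a = \<alpha> (i-1) then 1 else 0)
      + (\<alpha> i - \<alpha> (i-1)) / (\<alpha> (i+1) - \<alpha> (i-1)) * (if a = \<alpha> (i+1) then 1 else 0)
      - (if a = \<alpha> i then 1 else 0))"

definition basic_circuit :: "(nat \<Rightarrow> real) \<Rightarrow> nat \<Rightarrow> real \<Rightarrow> real" where
  "basic_circuit \<alpha> i = (if i = 1 then boundary_circuit \<alpha> else interior_circuit \<alpha> i)"

locale increasing_nodes =
  fixes \<alpha> :: "nat \<Rightarrow> real" and m :: nat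
  assumes two_le_m: "2 \<le> m" and strict_mono: "strict_mono_on {1..m} \<alpha>"
begin

abbreviation nodes :: "real set" where
  "nodes \<equiv> \<alpha> ` {1..m}"

abbreviation moment :: "nat \<Rightarrow> (real \<Rightarrow> real) \<Rightarrow> real" where
  "moment j \<equiv> hinge_moment nodes (\<alpha> j)"

lemma node_less_iff: "i \<in> {1..m} \<Longrightarrow> j \<in> {1..m} \<Longrightarrow> \<alpha> i < \<alpha> j \<longleftrightarrow> i < j"
  by (rule strict_mono_on_less[OF strict_mono])

lemma node_le_iff: "i \<in> {1..m} \<Longrightarrow> j \<in> {1..m} \<Longrightarrow> \<alpha> i \<le> \<alpha> j \<longleftrightarrow> i \<le> j"
  by (rule strict_mono_on_less_eq[OF strict_mono])

lemma node_eq_iff: "i \<in> {1..m} \<Longrightarrow> j \<in> {1..m} \<Longrightarrow> \<alpha> i = \<alpha> j \<longleftrightarrow> i = j"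
  by (rule strict_mono_on_eq[OF strict_mono])

lemma first_nodes_less: "\<alpha> 1 < \<alpha> 2"
  using node_less_iff[of 1 2] two_le_m by simp

lemma neighbour_nodes_less:
  assumes "i \<in> {1..<m}" "i \<noteq> 1"
  shows "\<alpha> (i-1) < \<alpha> i" and "\<alpha> i < \<alpha> (i+1)"
proof -
  have "i - 1 \<in> {1..m}" "i \<in> {1..m}" "i + 1 \<in> {1..m}" "i - 1 < i"
    using assms by auto
  then show "\<alpha> (i-1) < \<alpha> i" and "\<alpha> i < \<alpha> (i+1)"
    using node_less_iff by auto
qed

lemma sum_basic_circuit_mult:
  assumes "i \<in> {1..<m}"
  shows "(\<Sum>a\<in>nodes. basic_circuit \<alpha> i a * h a) =
    (if i = 1 then h (\<alpha> 2) - h (\<alpha> 1)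
     else (\<alpha> (i+1) - \<alpha> i) / (\<alpha> (i+1) - \<alpha> (i-1)) * h (\<alpha> (i-1))
        + (\<alpha> i - \<alpha> (i-1)) / (\<alpha> (i+1) - \<alpha> (i-1)) * h (\<alpha> (i+1)) - h (\<alpha> i))"
proof -
  have point_masses: "(\<Sum>a\<in>nodes. (x * (if a = p then 1 else 0) + y * (if a = q then 1 else 0)
        - (if a = r then 1 else 0)) * h a) = x * h p + y * h q - h r"
    if "p \<in> nodes" "q \<in> nodes" "r \<in> nodes" for x y p q r
  proof -
    have "(\<Sum>a\<in>nodes. (x * (if a = p then 1 else 0) + y * (if a = q then 1 else 0)
          - (if a = r then 1 else 0)) * h a)
        = (\<Sum>a\<in>nodes. (if a = p then x * h a else 0) + (if a = q then y * h a else 0)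
          - (if a = r then h a else 0))"
      by (rule sum.cong) (auto simp: algebra_simps)
    then show ?thesis
      using that by (simp add: sum.distrib sum_subtractf)
  qed
  show ?thesis
  proof (cases "i = 1")
    case True
    then show ?thesis
      using point_masses[of "\<alpha> 1" "\<alpha> 2" "\<alpha> 1" 0 1] two_le_m
      by (simp add: basic_circuit_def boundary_circuit_def)
  next
    case False
    then have "i - 1 \<in> {1..m}" "i \<in> {1..m}" "i + 1 \<in> {1..m}"
      using assms by auto
    then have "(\<Sum>a\<in>nodes. interior_circuit \<alpha> i a * h a)
        = (\<alpha> (i+1) - \<alpha> i) / (\<alpha> (i+1) - \<alpha> (i-1)) * h (\<alpha> (i-1))
          + (\<alpha> i - \<alpha> (i-1)) / (\<alpha> (i+1) - \<alpha> (i-1)) * h (\<alpha> (i+1)) - h (\<alpha> i)"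
      unfolding interior_circuit_def by (intro point_masses) auto
    then show ?thesis
      using False by (simp add: basic_circuit_def)
  qed
qed

lemma basic_circuit_outside:
  assumes "i \<in> {1..<m}" "a \<notin> nodes"
  shows "basic_circuit \<alpha> i a = 0"
proof -
  have "a \<noteq> \<alpha> j" if "j \<in> {1..m}" for j
    using assms(2) that by auto
  moreover have "i - 1 \<in> {1..m}" if "i \<noteq> 1"
    using assms(1) that by auto
  moreover have "1 \<in> {1..m}" "2 \<in> {1..m}" "i \<in> {1..m}" "i + 1 \<in> {1..m}"
    using assms(1) two_le_m by auto
  ultimately show ?thesis
    by (simp add: basic_circuit_def boundary_circuit_def interior_circuit_def)
qed

lemma basic_circuit_self:
  assumes "i \<in> {1..<m}"
  shows "basic_circuit \<alpha> i (\<alpha> i) = -1"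
proof (cases "i = 1")
  case True
  then show ?thesis
    using first_nodes_less by (simp add: basic_circuit_def boundary_circuit_def)
next
  case False
  then have "\<alpha> i \<noteq> \<alpha> (i-1)" "\<alpha> i \<noteq> \<alpha> (i+1)"
    using neighbour_nodes_less[OF assms] by auto
  then show ?thesis
    using False by (simp add: basic_circuit_def interior_circuit_def)
qed

lemma basic_circuit_nonneg:
  assumes "i \<in> {1..<m}" "a \<noteq> \<alpha> i"
  shows "0 \<le> basic_circuit \<alpha> i a"
proof (cases "i = 1")
  case True
  then show ?thesis
    using assms(2) by (simp add: basic_circuit_def boundary_circuit_def)
next
  case False
  have "0 \<le> (\<alpha> (i+1) - \<alpha> i) / (\<alpha> (i+1) - \<alpha> (i-1))" "0 \<le> (\<alpha> i - \<alpha> (i-1)) / (\<alpha> (i+1) - \<alpha> (i-1))"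
    using neighbour_nodes_less[OF assms(1) False] by simp_all
  then show ?thesis
    using False assms(2) by (simp add: basic_circuit_def interior_circuit_def)
qed

lemma interior_barycentric:
  assumes "i \<in> {1..<m}" "i \<noteq> 1"
  shows "(\<alpha> (i+1) - \<alpha> i) / (\<alpha> (i+1) - \<alpha> (i-1)) + (\<alpha> i - \<alpha> (i-1)) / (\<alpha> (i+1) - \<alpha> (i-1)) = 1"
    and "(\<alpha> (i+1) - \<alpha> i) / (\<alpha> (i+1) - \<alpha> (i-1)) * \<alpha> (i-1)
       + (\<alpha> i - \<alpha> (i-1)) / (\<alpha> (i+1) - \<alpha> (i-1)) * \<alpha> (i+1) = \<alpha> i"
  using barycentric_weights[of "\<alpha> (i-1)" "\<alpha> (i+1)" "\<alpha> i"] neighbour_nodes_less[OF assms] by auto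

lemma basic_circuit_in_Ncone:
  assumes "i \<in> {1..<m}"
  shows "basic_circuit \<alpha> i \<in> Ncone nodes (\<alpha> i)"
proof -
  have "(\<Sum>a\<in>nodes. basic_circuit \<alpha> i a) = 0"
    using sum_basic_circuit_mult[OF assms, of "\<lambda>_. 1"] interior_barycentric(1)[OF assms]
    by (cases "i = 1") simp_all
  then show ?thesis
    using assms basic_circuit_outside basic_circuit_nonneg by (simp add: Ncone_def)
qed

lemma lin_comb_basic_circuit_nonneg:
  assumes "i \<in> {1..<m}"
  shows "0 \<le> lin_comb nodes (basic_circuit \<alpha> i)"
  using sum_basic_circuit_mult[OF assms, of "\<lambda>a. a"] interior_barycentric(2)[OF assms] first_nodes_less
  by (cases "i = 1") (simp_all add: lin_comb_real)

lemma basic_circuit_in_hinge_cone: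
  assumes "i \<in> {1..<m}"
  shows "basic_circuit \<alpha> i \<in> hinge_cone nodes"
proof -
  note N = basic_circuit_in_Ncone[OF assms]
  have "0 \<le> hinge_moment nodes t (basic_circuit \<alpha> i)" for t
    using hinge_moment_nonneg[OF N lin_comb_basic_circuit_nonneg[OF assms]] .
  then show ?thesis
    using N by (simp add: hinge_cone_def Ncone_def)
qed

lemma moment_basic_circuit_off_diagonal:
  assumes "i \<in> {1..<m}" "j \<in> {1..m}" "i \<noteq> j"
  shows "moment j (basic_circuit \<alpha> i) = 0"
proof (cases "i = 1")
  case True
  then have "\<alpha> 1 \<le> \<alpha> j" "\<alpha> 2 \<le> \<alpha> j"
    using assms two_le_m node_le_iff[of 1 j] node_le_iff[of 2 j] by auto
  then show ?thesis
    using True sum_basic_circuit_mult[OF assms(1), of "\<lambda>a. max 0 (a - \<alpha> j)"]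
    by (simp add: hinge_moment_def)
next
  case False
  have "i - 1 \<in> {1..m}" "i + 1 \<in> {1..m}"
    using assms(1) False by auto
  then have "\<alpha> j \<le> \<alpha> (i-1) \<or> \<alpha> (i+1) \<le> \<alpha> j"
    using assms(2,3) node_le_iff[of j "i-1"] node_le_iff[of "i+1" j] by auto
  then show ?thesis
    using False hat_combination_vanishes[OF neighbour_nodes_less[OF assms(1) False]]
      sum_basic_circuit_mult[OF assms(1), of "\<lambda>a. max 0 (a - \<alpha> j)"]
    by (simp add: hinge_moment_def)
qed

lemma moment_basic_circuit_diagonal_pos:
  assumes "i \<in> {1..<m}"
  shows "0 < moment i (basic_circuit \<alpha> i)"
  using first_nodes_less neighbour_nodes_less[OF assms]
    sum_basic_circuit_mult[OF assms, of "\<lambda>a. max 0 (a - \<alpha> i)"]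
  by (cases "i = 1") (simp_all add: hinge_moment_def)

lemma moment_eq_if_vanishes_above:
  assumes k: "k \<in> {1..<m}" and above: "\<forall>j\<in>{k+1<..m}. \<nu> (\<alpha> j) = 0"
  shows "moment k \<nu> = \<nu> (\<alpha> (k+1)) * (\<alpha> (k+1) - \<alpha> k)"
proof -
  have kk: "k \<in> {1..m}" "k + 1 \<in> {1..m}"
    using k by auto
  have "moment k \<nu> = (\<Sum>a\<in>nodes. if a = \<alpha> (k+1) then \<nu> (\<alpha> (k+1)) * (\<alpha> (k+1) - \<alpha> k) else 0)"
    unfolding hinge_moment_def
  proof (rule sum.cong[OF refl])
    fix a assume "a \<in> nodes"
    then obtain j where j: "j \<in> {1..m}" "a = \<alpha> j"
      by auto
    consider "j \<le> k" | "j = k + 1" | "k + 1 < j"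
      by linarith
    then show "\<nu> a * max 0 (a - \<alpha> k) = (if a = \<alpha> (k+1) then \<nu> (\<alpha> (k+1)) * (\<alpha> (k+1) - \<alpha> k) else 0)"
    proof cases
      case 1
      then show ?thesis
        using j kk node_le_iff[of j k] node_eq_iff[of j "k+1"] by simp
    next
      case 2
      then show ?thesis
        using j kk node_less_iff[of k "k+1"] by simp
    next
      case 3
      then show ?thesis
        using j kk above node_eq_iff[of j "k+1"] by simp
    qed
  qed
  also have "\<dots> = \<nu> (\<alpha> (k+1)) * (\<alpha> (k+1) - \<alpha> k)"
    using kk by simp
  finally show ?thesis .
qed

lemma eq_zero_if_moments_vanish:
  assumes supp: "\<forall>a. a \<notin> nodes \<longrightarrow> \<nu> a = 0" and total: "(\<Sum>a\<in>nodes. \<nu> a) = 0"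
    and moments: "\<forall>j\<in>{1..<m}. moment j \<nu> = 0"
  shows "\<nu> = (\<lambda>_. 0)"
proof -
  have above_first: "\<forall>j\<in>{1<..m}. \<nu> (\<alpha> j) = 0"
  proof (rule inc_induct[where P = "\<lambda>n. \<forall>j\<in>{n<..m}. \<nu> (\<alpha> j) = 0"])
    show "1 \<le> m"
      using two_le_m by simp
  next
    fix n assume n: "1 \<le> n" "n < m" and IH: "\<forall>j\<in>{Suc n<..m}. \<nu> (\<alpha> j) = 0"
    have "\<nu> (\<alpha> (n+1)) * (\<alpha> (n+1) - \<alpha> n) = 0"
      using moment_eq_if_vanishes_above[of n \<nu>] n IH moments by simp
    moreover have "\<alpha> n < \<alpha> (n+1)"
      using node_less_iff[of n "n+1"] n by simp
    ultimately have "\<nu> (\<alpha> (Suc n)) = 0"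
      by simp
    then show "\<forall>j\<in>{n<..m}. \<nu> (\<alpha> j) = 0"
      using IH by (metis Suc_leI greaterThanAtMost_iff le_eq_less_or_eq)
  qed simp
  have "(\<Sum>a\<in>nodes. \<nu> a) = (\<Sum>a\<in>nodes. if a = \<alpha> 1 then \<nu> (\<alpha> 1) else 0)"
  proof (rule sum.cong[OF refl])
    fix a assume "a \<in> nodes"
    then obtain j where j: "j \<in> {1..m}" "a = \<alpha> j"
      by auto
    then show "\<nu> a = (if a = \<alpha> 1 then \<nu> (\<alpha> 1) else 0)"
      using above_first node_eq_iff[of j 1] by (cases "j = 1") auto
  qed
  then have "\<nu> (\<alpha> 1) = 0"
    using total two_le_m by simp
  then have "\<nu> a = 0" if "a \<in> nodes" for a
    using that above_first by (auto simp: le_less)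
  then show ?thesis
    using supp by (intro ext) blast
qed

lemma hinge_expansion:
  assumes supp: "\<forall>a. a \<notin> nodes \<longrightarrow> \<nu> a = 0" and total: "(\<Sum>a\<in>nodes. \<nu> a) = 0"
  shows "\<nu> = (\<lambda>a. \<Sum>j\<in>{1..<m}. moment j \<nu> / moment j (basic_circuit \<alpha> j) * basic_circuit \<alpha> j a)"
proof -
  define c where "c j = moment j \<nu> / moment j (basic_circuit \<alpha> j)" for j
  define \<delta> where "\<delta> a = \<nu> a - (\<Sum>j\<in>{1..<m}. c j * basic_circuit \<alpha> j a)" for a
  have "\<delta> = (\<lambda>_. 0)"
  proof (rule eq_zero_if_moments_vanish)
    show "\<forall>a. a \<notin> nodes \<longrightarrow> \<delta> a = 0"
      using supp basic_circuit_outside by (simp add: \<delta>_def)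
    have "(\<Sum>a\<in>nodes. basic_circuit \<alpha> j a) = 0" if "j \<in> {1..<m}" for j
      using basic_circuit_in_hinge_cone[OF that] by (simp add: hinge_cone_def)
    then have "(\<Sum>a\<in>nodes. \<Sum>j\<in>{1..<m}. c j * basic_circuit \<alpha> j a) = 0"
      by (subst sum.swap) (simp add: sum_distrib_left[symmetric])
    then show "(\<Sum>a\<in>nodes. \<delta> a) = 0"
      using total by (simp add: \<delta>_def sum_subtractf)
    show "\<forall>k\<in>{1..<m}. moment k \<delta> = 0"
    proof
      fix k assume k: "k \<in> {1..<m}"
      have "moment k \<delta> = moment k \<nu> - (\<Sum>j\<in>{1..<m}. c j * moment k (basic_circuit \<alpha> j))"
        unfolding \<delta>_def by (simp add: hinge_moment_diff hinge_moment_sum)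
      also have "(\<Sum>j\<in>{1..<m}. c j * moment k (basic_circuit \<alpha> j)) = c k * moment k (basic_circuit \<alpha> k)"
        using k moment_basic_circuit_off_diagonal by (subst sum.remove[of _ k]) (auto intro!: sum.neutral)
      finally show "moment k \<delta> = 0"
        using moment_basic_circuit_diagonal_pos[OF k] by (simp add: c_def)
    qed
  qed
  then show ?thesis
    by (simp add: fun_eq_iff \<delta>_def c_def)
qed

lemma hinge_cone_basic_comb:
  assumes "\<nu> \<in> hinge_cone nodes"
  obtains c where "\<forall>j\<in>{1..<m}. 0 \<le> c j" and "\<nu> = (\<lambda>a. \<Sum>j\<in>{1..<m}. c j * basic_circuit \<alpha> j a)"
proof
  show "\<forall>j\<in>{1..<m}. 0 \<le> moment j \<nu> / moment j (basic_circuit \<alpha> j)"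
    using assms less_imp_le[OF moment_basic_circuit_diagonal_pos] by (simp add: hinge_cone_def)
  show "\<nu> = (\<lambda>a. \<Sum>j\<in>{1..<m}. moment j \<nu> / moment j (basic_circuit \<alpha> j) * basic_circuit \<alpha> j a)"
    using assms by (intro hinge_expansion) (auto simp: hinge_cone_def)
qed

lemma hinge_cone_split:
  assumes k: "k \<in> {1..<m}" and x: "x \<in> hinge_cone nodes" and y: "y \<in> hinge_cone nodes"
    and xy: "(\<lambda>a. x a + y a) = (\<lambda>a. s * basic_circuit \<alpha> k a)"
  shows "\<exists>c\<ge>0. x = (\<lambda>a. c * basic_circuit \<alpha> k a)"
proof -
  have off: "moment j x = 0" if j: "j \<in> {1..<m}" "j \<noteq> k" for j
  proof -
    have "moment j x + moment j y = s * moment j (basic_circuit \<alpha> k)"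
      using arg_cong[OF xy, of "moment j"] by (simp add: hinge_moment_add hinge_moment_scale)
    also have "\<dots> = 0"
      using moment_basic_circuit_off_diagonal[of k j] k j by simp
    finally show ?thesis
      using x y by (simp add: hinge_cone_def add_nonneg_eq_0_iff)
  qed
  have "x = (\<lambda>a. \<Sum>j\<in>{1..<m}. moment j x / moment j (basic_circuit \<alpha> j) * basic_circuit \<alpha> j a)"
    using x by (intro hinge_expansion) (auto simp: hinge_cone_def)
  also have "\<dots> = (\<lambda>a. moment k x / moment k (basic_circuit \<alpha> k) * basic_circuit \<alpha> k a)"
    using k off by (intro ext, subst sum.remove[of _ k]) (auto intro!: sum.neutral)
  finally have "x = (\<lambda>a. moment k x / moment k (basic_circuit \<alpha> k) * basic_circuit \<alpha> k a)" .
  moreover have "0 \<le> moment k x / moment k (basic_circuit \<alpha> k)"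
    using x less_imp_le[OF moment_basic_circuit_diagonal_pos[OF k]] by (simp add: hinge_cone_def)
  ultimately show ?thesis
    by blast
qed

section \<open>Reduced circuits\<close>

lemma basic_circuit_norm_circuit:
  assumes k: "k \<in> {1..<m}"
  shows "basic_circuit \<alpha> k \<in> norm_circuits {0..} nodes"
proof -
  have indecomposable: "proportional \<nu>1 \<nu>2"
    if \<nu>: "\<nu>1 \<in> Ncone nodes (\<alpha> k)" "\<nu>2 \<in> Ncone nodes (\<alpha> k)" and t: "0 < t" "t < 1"
      and split: "basic_circuit \<alpha> k = (\<lambda>a. (1 - t) * \<nu>1 a + t * \<nu>2 a)"
      and affine: "affine_on_segment {0..} nodes \<nu>1 \<nu>2" for \<nu>1 \<nu>2 t
  proof -
    have "\<nu>1 \<in> hinge_cone nodes" "\<nu>2 \<in> hinge_cone nodes"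
      using \<nu> affine Ncone_halfline_in_hinge_cone by (auto simp: affine_on_segment_def)
    then have cone: "(\<lambda>a. (1 - t) * \<nu>1 a) \<in> hinge_cone nodes" "(\<lambda>a. t * \<nu>2 a) \<in> hinge_cone nodes"
      using t hinge_cone_scale by auto
    obtain c1 where c1: "(\<lambda>a. (1 - t) * \<nu>1 a) = (\<lambda>a. c1 * basic_circuit \<alpha> k a)"
      using hinge_cone_split[OF k cone, of 1] split by auto
    obtain c2 where c2: "(\<lambda>a. t * \<nu>2 a) = (\<lambda>a. c2 * basic_circuit \<alpha> k a)"
      using hinge_cone_split[OF k cone(2,1), of 1] split by (auto simp: add.commute)
    have "\<nu>1 = (\<lambda>a. c1 / (1 - t) * basic_circuit \<alpha> k a)" "\<nu>2 = (\<lambda>a. c2 / t * basic_circuit \<alpha> k a)"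
      using c1 c2 t by (auto simp: fun_eq_iff field_simps dest: fun_cong)
    then show ?thesis
      by (rule proportional_multiples)
  qed
  have "basic_circuit \<alpha> k \<noteq> (\<lambda>_. 0)"
    using basic_circuit_self[OF k] by (auto dest: fun_cong[of _ _ "\<alpha> k"])
  then have "is_X_circuit {0..} nodes (\<alpha> k) (basic_circuit \<alpha> k)"
    using basic_circuit_in_Ncone[OF k] lin_comb_basic_circuit_nonneg[OF k] indecomposable
    by (auto simp: is_X_circuit_def circ_fun_halfline)
  then show ?thesis
    using k basic_circuit_self[OF k] by (auto simp: norm_circuits_def)
qed

lemma basic_circuit_func_form:
  "k \<in> {1..<m} \<Longrightarrow> func_form {0..} nodes (basic_circuit \<alpha> k) = (basic_circuit \<alpha> k, 0)"
  by (rule norm_circuit_halfline(2)[OF basic_circuit_norm_circuit])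

lemma basic_comb_in_circuit_graph:
  assumes "J \<subseteq> {1..<m}" and "\<forall>j\<in>J. 0 \<le> c j"
  shows "((\<lambda>a. \<Sum>j\<in>J. c j * basic_circuit \<alpha> j a), 0) \<in> circuit_graph {0..} nodes"
proof -
  have "finite J"
    using assms(1) finite_subset by blast
  moreover have "basic_circuit \<alpha> ` J \<subseteq> norm_circuits {0..} nodes"
    using assms(1) basic_circuit_norm_circuit by auto
  ultimately have "((\<lambda>a. \<Sum>j\<in>J. c j * basic_circuit \<alpha> j a),
      \<Sum>j\<in>J. c j * snd (func_form {0..} nodes (basic_circuit \<alpha> j))) \<in> circuit_graph {0..} nodes"
    using assms(2) by (rule circuit_graph_nonneg_comb)
  moreover have "(\<Sum>j\<in>J. c j * snd (func_form {0..} nodes (basic_circuit \<alpha> j))) = 0"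
    using assms(1) basic_circuit_func_form by (intro sum.neutral) auto
  ultimately show ?thesis
    by simp
qed

lemma basic_circuit_extreme:
  assumes k: "k \<in> {1..<m}"
  shows "extreme_ray (circuit_graph {0..} nodes) (func_form {0..} nodes (basic_circuit \<alpha> k))"
  unfolding extreme_ray_def basic_circuit_func_form[OF k]
proof (intro conjI ballI impI subsetI)
  show "(basic_circuit \<alpha> k, 0) \<noteq> (\<lambda>_. 0, 0)"
    using basic_circuit_self[OF k] by (auto dest: fun_cong[of _ _ "\<alpha> k"])
next
  fix z assume "z \<in> ray (basic_circuit \<alpha> k, 0)"
  then obtain t where "0 \<le> t" "z = ((\<lambda>a. \<Sum>j\<in>{k}. t * basic_circuit \<alpha> j a), 0)"
    unfolding ray_def by auto
  then show "z \<in> circuit_graph {0..} nodes"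
    using basic_comb_in_circuit_graph[of "{k}" "\<lambda>_. t"] k by simp
next
  fix x y assume x: "x \<in> circuit_graph {0..} nodes" and y: "y \<in> circuit_graph {0..} nodes"
    and "((\<lambda>a. fst x a + fst y a), snd x + snd y) \<in> ray (basic_circuit \<alpha> k, 0)"
  then obtain t where sum_fst: "(\<lambda>a. fst x a + fst y a) = (\<lambda>a. t * basic_circuit \<alpha> k a)"
    and sum_snd: "snd x + snd y = 0"
    unfolding ray_def by auto
  have "snd x = 0" "snd y = 0"
    using sum_snd circuit_graph_halfline(2)[OF x] circuit_graph_halfline(2)[OF y] by auto
  moreover obtain cx where "0 \<le> cx" "fst x = (\<lambda>a. cx * basic_circuit \<alpha> k a)"
    using hinge_cone_split[OF k circuit_graph_halfline(1)[OF x] circuit_graph_halfline(1)[OF y] sum_fst]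
    by blast
  moreover have "(\<lambda>a. fst y a + fst x a) = (\<lambda>a. t * basic_circuit \<alpha> k a)"
    using sum_fst by (simp add: fun_eq_iff add.commute)
  then obtain cy where "0 \<le> cy" "fst y = (\<lambda>a. cy * basic_circuit \<alpha> k a)"
    using hinge_cone_split[OF k circuit_graph_halfline(1)[OF y] circuit_graph_halfline(1)[OF x]] by blast
  ultimately show "x \<in> ray (basic_circuit \<alpha> k, 0)" "y \<in> ray (basic_circuit \<alpha> k, 0)"
    unfolding ray_def by (auto intro!: exI prod_eqI)
qed

lemma normalized_multiple_of_basic_circuit:
  assumes j: "j \<in> {1..<m}" and N: "l \<in> Ncone nodes \<beta>" and normalized: "l \<beta> = -1"
    and c: "0 < c" and t: "0 \<le> t" and multiple: "(\<lambda>a. c * basic_circuit \<alpha> j a) = (\<lambda>a. t * l a)"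
  shows "l = basic_circuit \<alpha> j"
proof -
  have at_node: "- c = t * l (\<alpha> j)"
    using fun_cong[OF multiple, of "\<alpha> j"] basic_circuit_self[OF j] by simp
  then have "l (\<alpha> j) < 0"
    using c t mult_nonneg_nonneg[of t "l (\<alpha> j)"] by linarith
  moreover have "\<alpha> j \<in> nodes"
    using j by auto
  ultimately have "\<alpha> j = \<beta>"
    using N unfolding Ncone_def by force
  then have "t = c"
    using at_node normalized by simp
  then show ?thesis
    using multiple c by (auto simp: fun_eq_iff dest: fun_cong)
qed

lemma reduced_circuit_is_basic:
  assumes "l \<in> reduced_circuits {0..} nodes"
  shows "l \<in> basic_circuit \<alpha> ` {1..<m}"
proof -
  have norm: "l \<in> norm_circuits {0..} nodes"
    and extreme: "extreme_ray (circuit_graph {0..} nodes) (l, 0)"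
    using assms norm_circuit_halfline(2) by (auto simp: reduced_circuits_def)
  obtain \<beta> where N: "l \<in> Ncone nodes \<beta>" and normalized: "l \<beta> = -1"
    using norm by (auto simp: norm_circuits_def is_X_circuit_def)
  obtain c where c_nonneg: "\<forall>j\<in>{1..<m}. 0 \<le> c j"
    and expansion: "l = (\<lambda>a. \<Sum>j\<in>{1..<m}. c j * basic_circuit \<alpha> j a)"
    using hinge_cone_basic_comb[OF norm_circuit_halfline(1)[OF norm]] by blast
  have "\<exists>j0\<in>{1..<m}. c j0 \<noteq> 0"
  proof (rule ccontr)
    assume "\<not> (\<exists>j0\<in>{1..<m}. c j0 \<noteq> 0)"
    then have "l = (\<lambda>_. 0)"
      by (subst expansion) simp
    then show False
      using normalized by simp
  qed
  then obtain j0 where j0: "j0 \<in> {1..<m}" "c j0 \<noteq> 0"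
    by blast
  define x where "x = ((\<lambda>a. \<Sum>j\<in>{j0}. c j * basic_circuit \<alpha> j a), 0::real)"
  define y where "y = ((\<lambda>a. \<Sum>j\<in>{1..<m} - {j0}. c j * basic_circuit \<alpha> j a), 0::real)"
  have "x \<in> circuit_graph {0..} nodes" "y \<in> circuit_graph {0..} nodes"
    unfolding x_def y_def by (rule basic_comb_in_circuit_graph; use j0(1) c_nonneg in auto)+
  moreover have "(\<lambda>a. fst x a + fst y a) = l"
    unfolding x_def y_def using j0(1) by (subst expansion) (simp add: sum.remove)
  ultimately have "x \<in> ray (l, 0)"
    using extreme_ray_summand[OF extreme] by (simp add: x_def y_def)
  then obtain t where t: "0 \<le> t" "(\<lambda>a. c j0 * basic_circuit \<alpha> j0 a) = (\<lambda>a. t * l a)"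
    unfolding ray_def x_def by auto
  have "0 < c j0"
    using j0 c_nonneg by force
  then have "l = basic_circuit \<alpha> j0"
    using normalized_multiple_of_basic_circuit[OF j0(1) N normalized _ t] by blast
  then show ?thesis
    using j0(1) by simp
qed

lemma reduced_circuits_eq: "reduced_circuits {0..} nodes = basic_circuit \<alpha> ` {1..<m}"
  using reduced_circuit_is_basic basic_circuit_norm_circuit basic_circuit_extreme
  by (auto simp: reduced_circuits_def)

end

theorem mainTheorem20:
  fixes \<alpha> :: "nat \<Rightarrow> real" and m :: nat
  assumes "m \<ge> 2"
    and "strict_mono_on {1..m} \<alpha>"
  shows "reduced_circuits {0..} (\<alpha> ` {1..m}) =
           {(\<lambda>a. (if a = \<alpha> 2 then 1 else 0) - (if a = \<alpha> 1 then 1 else 0))}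
         \<union> {(\<lambda>a. (\<alpha> (i+1) - \<alpha> i) / (\<alpha> (i+1) - \<alpha> (i-1)) * (if a = \<alpha> (i-1) then 1 else 0)
                 + (\<alpha> i - \<alpha> (i-1)) / (\<alpha> (i+1) - \<alpha> (i-1)) * (if a = \<alpha> (i+1) then 1 else 0)
                 - (if a = \<alpha> i then 1 else 0)) | i. 1 < i \<and> i < m}"
proof -
  interpret increasing_nodes \<alpha> m
    using assms by unfold_locales
  have "reduced_circuits {0..} nodes = {boundary_circuit \<alpha>} \<union> {interior_circuit \<alpha> i | i. 1 < i \<and> i < m}"
    unfolding reduced_circuits_eq using assms(1) by (auto simp: basic_circuit_def image_iff)
  then show ?thesis
    unfolding boundary_circuit_def interior_circuit_def .
qed

end
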